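(* For all integers $m,n\ge 0$ and all real $t$, $$H_{m,n}(t)=m!\,n!\left(\frac{1}{\sqrt2}\right)^{m+n}\sum_{j=0}^{n}\sum_{k=j}^{m}\frac{(-1)^j}{j!\,(k-j)!}\,H_{k-j}(0)\,\frac{H_{m-k,n-j}(\sqrt2\,t)}{(m-k)!\,(n-j)!},$$ where an inner sum with empty range ($j>m$) is zero.
   Context: For integers $m\ge 0$, the Hermite polynomial is $H_m(x)=(-1)^m e^{x^2}\frac{d^m}{dx^m}\big(e^{-x^2}\big)$. For integers $m,n\ge 0$, the two-index Hermite polynomial is $H_{m,n}(x)=\left(-\frac{d}{dx}+2x\right)^m(x^n)$, i.e. the operator $f\mapsto -f'+2xf$ applied $m$ times to $x^n$. *)

theory Defs
  imports "HOL-Analysis.Analysis"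
begin

definition hermite :: "nat \<Rightarrow> real \<Rightarrow> real" where
  "hermite m x = (-1) ^ m * exp (x\<^sup>2) * (deriv ^^ m) (\<lambda>y. exp (- (y\<^sup>2))) x"

definition hermite_op :: "(real \<Rightarrow> real) \<Rightarrow> (real \<Rightarrow> real)" where
  "hermite_op f = (\<lambda>x. - deriv f x + 2 * x * f x)"

definition hermite2 :: "nat \<Rightarrow> nat \<Rightarrow> real \<Rightarrow> real" where
  "hermite2 m n = (hermite_op ^^ m) (\<lambda>x. x ^ n)"

end

theory Submission
  imports Defs "HOL-Computational_Algebra.Formal_Power_Series"
begin

(* With G(s,u;x) = exp(2sx - s^2 + ux - su) the exponential generating
   function of the H_{m,n}(x), the theorem is the coefficient form of
     G(s,u;t) = exp(-su/2) * G(s/sqrt 2, 0; 0) * G(s/sqrt 2, u/sqrt 2; sqrt 2 t).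
   Since bivariate power series are not available, we expand in u by hand and work with
   one-variable formal power series in s only:
   1. H_{m,n} satisfies the Appell-type derivative rule H'_{m,n} = 2m H_{m-1,n} + n H_{m,n-1}
      and hence the three-term recurrence H_{m+1,n} = 2x H_{m,n} - 2m H_{m-1,n} - n H_{m,n-1};
      moreover H_m = H_{m,0}, which identifies the values H_k(0).
   2. The scaled series E_q(s) = sum_p l^(p+q) H_{p,q}(x) s^p/(p! q!) satisfies the linear
      ODE E_q' = (2xl - 2l^2 s) E_q - l^2 E_{q-1}.
   3. The series R_n = sum_j (-s/2)^j/j! * E_0(s) * E_{n-j}(s), where the first E is taken at
      x = 0 and the second at x = sqrt 2 t, both with l = 1/sqrt 2, satisfies the same ODE family
      as E_n at x = t, l = 1, with the same constant terms.  Solutions of first-order linear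
      ODEs over formal power series are determined by their constant term, so E_n = R_n.
   4. Comparing the s^m coefficients of E_n and R_n gives the theorem. *)

section \<open>Recurrences for the two-index Hermite polynomials\<close>

lemma hermite2_0: "hermite2 0 n = (\<lambda>x. x ^ n)"
  by (simp add: hermite2_def)

lemma hermite2_Suc_op:
  "hermite2 (Suc m) n x = - deriv (hermite2 m n) x + 2 * x * hermite2 m n x"
  by (simp add: hermite2_def hermite_op_def)

text \<open>The derivative rule H'(m,n) = 2m H(m-1,n) + n H(m,n-1); proved by strong
  induction on m, using at level m the recurrence that the rule yields at lower levels.\<close>

lemma hermite2_has_derivative:
  "(hermite2 m n has_real_derivative
      (2 * real m * hermite2 (m - 1) n x + real n * hermite2 m (n - 1) x)) (at x)"
proof (induction m arbitrary: n x rule: less_induct)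
  case (less m)
  show ?case
  proof (cases m)
    case 0
    show ?thesis using DERIV_pow[of n x] by (simp add: 0 hermite2_0)
  next
    case (Suc k)
    have recurrence: "hermite2 (Suc j) n' y = 2 * y * hermite2 j n' y
        - 2 * real j * hermite2 (j - 1) n' y - real n' * hermite2 j (n' - 1) y"
      if "j < m" for j n' y
      using hermite2_Suc_op[of j n' y] DERIV_imp_deriv[OF less[OF that, of n' y]] by simp
    have unfolded: "hermite2 m n = (\<lambda>y. 2 * y * hermite2 k n y
        - 2 * real k * hermite2 (k - 1) n y - real n * hermite2 k (n - 1) y)"
      using recurrence[of k] Suc by auto
    have deriv: "(hermite2 m n has_real_derivative
        (2 * hermite2 k n x
           + 2 * x * (2 * real k * hermite2 (k - 1) n x + real n * hermite2 k (n - 1) x))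
        - 2 * real k * (2 * real (k - 1) * hermite2 (k - 1 - 1) n x
           + real n * hermite2 (k - 1) (n - 1) x)
        - real n * (2 * real k * hermite2 (k - 1) (n - 1) x
           + real (n - 1) * hermite2 k (n - 1 - 1) x)) (at x)"
      unfolding unfolded by (rule derivative_eq_intros less Suc | simp add: Suc)+
    have rec_n: "real n * hermite2 (Suc k) (n - 1) x = real n * (2 * x * hermite2 k (n - 1) x
        - 2 * real k * hermite2 (k - 1) (n - 1) x - real (n - 1) * hermite2 k (n - 1 - 1) x)"
      using recurrence[of k] Suc by auto
    have rec_k: "real k * hermite2 k n x = real k * (2 * x * hermite2 (k - 1) n x
        - 2 * real (k - 1) * hermite2 (k - 1 - 1) n x - real n * hermite2 (k - 1) (n - 1) x)"
    proof (cases k)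
      case (Suc k')
      then show ?thesis using recurrence[of k'] \<open>m = Suc k\<close> by auto
    qed simp
    show ?thesis
      by (rule DERIV_cong[OF deriv]) (use rec_n rec_k in \<open>simp add: Suc algebra_simps\<close>)
  qed
qed

lemma hermite2_Suc:
  "hermite2 (Suc m) n x = 2 * x * hermite2 m n x - 2 * real m * hermite2 (m - 1) n x
     - real n * hermite2 m (n - 1) x"
  using hermite2_Suc_op[of m n x] DERIV_imp_deriv[OF hermite2_has_derivative[of m n x]] by simp

text \<open>Rodrigues' formula read backwards: the derivatives of the Gaussian are
  (-1)^k H(k,0) exp(-x^2).  Hence the classical Hermite polynomials are the
  two-index ones with second index 0.\<close>

lemma gaussian_higher_deriv:
  "(deriv ^^ k) (\<lambda>y. exp (- (y\<^sup>2))) = (\<lambda>y. (-1) ^ k * hermite2 k 0 y * exp (- (y\<^sup>2)))"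
proof (induction k)
  case 0
  then show ?case by (simp add: hermite2_0)
next
  case (Suc k)
  show ?case
  proof (rule ext)
    fix y
    have deriv: "((\<lambda>y. (-1) ^ k * hermite2 k 0 y * exp (- (y\<^sup>2))) has_real_derivative
        (-1) ^ k * (2 * real k * hermite2 (k - 1) 0 y) * exp (- (y\<^sup>2))
        + (-1) ^ k * hermite2 k 0 y * (exp (- (y\<^sup>2)) * (- (2 * y)))) (at y)"
      by (rule derivative_eq_intros hermite2_has_derivative refl | simp)+
    show "(deriv ^^ Suc k) (\<lambda>y. exp (- y\<^sup>2)) y
        = (-1) ^ Suc k * hermite2 (Suc k) 0 y * exp (- y\<^sup>2)"
      using DERIV_imp_deriv[OF deriv] Suc by (simp add: hermite2_Suc algebra_simps)
  qed
qed

lemma hermite_eq_hermite2: "hermite k x = hermite2 k 0 x"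
proof -
  have "exp (x\<^sup>2) * exp (- (x\<^sup>2)) = 1" and "(-1) ^ k * (-1) ^ k = (1::real)"
    by (simp_all flip: exp_add power_mult_distrib)
  then show ?thesis
    by (simp add: hermite_def gaussian_higher_deriv algebra_simps)
qed

text \<open>A solution of f' = P f + Q is determined by its constant term, because
  the ODE determines each coefficient from the preceding ones.\<close>

lemma fps_linear_ode_unique:
  fixes f g P Q :: "'a :: field_char_0 fps"
  assumes f: "fps_deriv f = P * f + Q" and g: "fps_deriv g = P * g + Q"
    and init: "fps_nth f 0 = fps_nth g 0"
  shows "f = g"
proof -
  define D where "D = f - g"
  have ode: "fps_deriv D = P * D"
    using f g by (simp add: D_def algebra_simps)
  have "\<forall>k\<le>m. fps_nth D k = 0" for m
  proof (induction m)
    case 0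
    then show ?case using init by (simp add: D_def)
  next
    case (Suc m)
    have "fps_nth (fps_deriv D) m = (\<Sum>i=0..m. fps_nth P i * fps_nth D (m - i))"
      using ode by (simp add: fps_mult_nth)
    also have "\<dots> = 0"
      using Suc by (intro sum.neutral) auto
    finally have "of_nat (Suc m) * fps_nth D (Suc m) = 0"
      by simp
    then have "fps_nth D (Suc m) = 0"
      by (simp only: mult_eq_0_iff of_nat_eq_0_iff) simp
    then show ?case
      using Suc by (auto simp: le_Suc_eq)
  qed
  then have "D = 0"
    by (intro fps_ext) auto
  then show ?thesis
    by (simp add: D_def)
qed

section \<open>The generating series and its ODE\<close>

text \<open>The s-part of the generating function, at fixed power q of the second variable and
  with both variables scaled by l: sum over p of l^(p+q) H(p,q)(x) s^p/(p! q!).\<close>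

definition hermite_gf :: "real \<Rightarrow> real \<Rightarrow> nat \<Rightarrow> real fps" where
  "hermite_gf x l q = Abs_fps (\<lambda>p. l ^ (p + q) * hermite2 p q x / (fact p * fact q))"

lemma hermite_gf_nth:
  "fps_nth (hermite_gf x l q) p = l ^ (p + q) * hermite2 p q x / (fact p * fact q)"
  by (simp add: hermite_gf_def)

text \<open>The three-term recurrence, divided by factorials, as a relation between the
  coefficients of consecutive series.\<close>

lemma hermite_gf_coeff_recurrence:
  "real (Suc p) * fps_nth (hermite_gf x l q) (Suc p) =
    2 * x * l * fps_nth (hermite_gf x l q) p
    - 2 * l^2 * (if p = 0 then 0 else fps_nth (hermite_gf x l q) (p - 1))
    - l^2 * (if q = 0 then 0 else fps_nth (hermite_gf x l (q - 1)) p)"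
proof -
  have lhs: "real (Suc p) * fps_nth (hermite_gf x l q) (Suc p)
     = l ^ (Suc p + q) * hermite2 (Suc p) q x / (fact p * fact q)"
    unfolding hermite_gf_nth fact_Suc of_nat_mult by (simp del: of_nat_Suc)
  have lower_p: "2 * l^2 * (if p = 0 then 0 else fps_nth (hermite_gf x l q) (p - 1))
     = l ^ (Suc p + q) * (2 * real p * hermite2 (p - 1) q x) / (fact p * fact q)"
  proof (cases p)
    case (Suc p')
    then show ?thesis
      by (simp add: hermite_gf_nth fact_Suc field_simps power2_eq_square del: of_nat_Suc)
  qed simp
  have lower_q: "l^2 * (if q = 0 then 0 else fps_nth (hermite_gf x l (q - 1)) p)
     = l ^ (Suc p + q) * (real q * hermite2 p (q - 1) x) / (fact p * fact q)"
  proof (cases q)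
    case (Suc q')
    then show ?thesis
      by (simp add: hermite_gf_nth fact_Suc field_simps power2_eq_square del: of_nat_Suc)
  qed simp
  show ?thesis
    unfolding lhs lower_p lower_q unfolding hermite2_Suc
    by (simp add: hermite_gf_nth field_simps)
qed

lemma hermite_gf_deriv:
  "fps_deriv (hermite_gf x l q) =
     (fps_const (2 * x * l) - fps_const (2 * l^2) * fps_X) * hermite_gf x l q
     - fps_const (l^2) * (if q = 0 then 0 else hermite_gf x l (q - 1))"
proof (rule fps_ext)
  fix p
  show "fps_nth (fps_deriv (hermite_gf x l q)) p =
    fps_nth ((fps_const (2 * x * l) - fps_const (2 * l^2) * fps_X) * hermite_gf x l q
     - fps_const (l^2) * (if q = 0 then 0 else hermite_gf x l (q - 1))) p"
    using hermite_gf_coeff_recurrence[of p x l q] by (cases p; cases q) (simp_all add: algebra_simps)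
qed

section \<open>The right-hand side as a product of series\<close>

text \<open>The factor (-s/2)^j/j!: the u^j-part of exp(-su/2).\<close>

definition cross_series :: "nat \<Rightarrow> real fps" where
  "cross_series j = fps_const ((-1) ^ j * (1/2) ^ j / fact j) * fps_X ^ j"

lemma cross_series_deriv_0: "fps_deriv (cross_series 0) = 0"
  by (simp add: cross_series_def)

lemma cross_series_deriv_Suc:
  "fps_deriv (cross_series (Suc j)) = - (fps_const (1/2) * cross_series j)"
proof -
  have coeff: "(-1) ^ Suc j * (1/2) ^ Suc j / fact (Suc j) * real (Suc j)
      = - (1/2) * ((-1) ^ j * (1/2) ^ j / fact j :: real)"
    by (simp add: fact_Suc field_simps del: of_nat_Suc)
  have "fps_deriv (cross_series (Suc j)) =
      fps_const ((-1) ^ Suc j * (1/2) ^ Suc j / fact (Suc j) * real (Suc j)) * fps_X ^ j"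
    unfolding cross_series_def fps_deriv_mult_const_left fps_deriv_power
    by (simp flip: fps_const_mult add: mult.assoc)
  also have "\<dots> = - (fps_const (1/2) * cross_series j)"
    unfolding coeff cross_series_def by (simp flip: fps_const_mult fps_const_neg add: mult.assoc)
  finally show ?thesis .
qed

text \<open>The series R_n = sum over j of cross_series j * G(s/sqrt 2,0;0) * G_{n-j}(s/sqrt 2, sqrt 2 t),
  i.e. the u^n-part of the right-hand side of the generating function identity.\<close>

definition rhs_series :: "real \<Rightarrow> nat \<Rightarrow> real fps" where
  "rhs_series t n = (\<Sum>j=0..n. cross_series j * hermite_gf 0 (1 / sqrt 2) 0
                                  * hermite_gf (sqrt 2 * t) (1 / sqrt 2) (n - j))"

lemma inv_sqrt2_squared: "(1 / sqrt 2) ^ 2 = (1/2 :: real)"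
  by (simp add: power_divide)

lemma rhs_summand_deriv:
  fixes C :: "real fps" and t :: real
  defines "H \<equiv> hermite_gf 0 (1 / sqrt 2) 0" and "B \<equiv> hermite_gf (sqrt 2 * t) (1 / sqrt 2)"
  shows "fps_deriv (C * H * B q) =
     (fps_const (2 * t) - fps_const 2 * fps_X) * (C * H * B q) + fps_deriv C * H * B q
     - fps_const (1/2) * (C * H * (if q = 0 then 0 else B (q - 1)))"
proof -
  have H': "fps_deriv H = - (fps_X * H)"
    unfolding H_def by (simp add: hermite_gf_deriv inv_sqrt2_squared)
  have B': "fps_deriv (B q) = (fps_const (2 * t) - fps_X) * B q
      - fps_const (1/2) * (if q = 0 then 0 else B (q - 1))"
    unfolding B_def by (simp add: hermite_gf_deriv inv_sqrt2_squared)
  show ?thesis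
    by (simp add: H' B' algebra_simps numeral_2_eq_2 fps_const_add [symmetric])
qed

lemma rhs_series_deriv:
  "fps_deriv (rhs_series t n) = (fps_const (2 * t) - fps_const 2 * fps_X) * rhs_series t n
     - (if n = 0 then 0 else rhs_series t (n - 1))"
proof -
  define P where "P = fps_const (2 * t) - fps_const 2 * (fps_X :: real fps)"
  define H where "H = hermite_gf 0 (1 / sqrt 2) 0"
  define B where "B = hermite_gf (sqrt 2 * t) (1 / sqrt 2)"
  define S1 where "S1 = (\<Sum>j=0..n. fps_deriv (cross_series j) * H * B (n - j))"
  define S2 where "S2 = (\<Sum>j=0..n. cross_series j * H * (if n - j = 0 then 0 else B (n - j - 1)))"
  have R: "rhs_series t k = (\<Sum>j=0..k. cross_series j * H * B (k - j))" for k
    by (simp add: rhs_series_def H_def B_def)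
  have "fps_deriv (rhs_series t n) = (\<Sum>j=0..n. P * (cross_series j * H * B (n - j))
      + fps_deriv (cross_series j) * H * B (n - j)
      - fps_const (1/2) * (cross_series j * H * (if n - j = 0 then 0 else B (n - j - 1))))"
    unfolding R fps_deriv_sum P_def H_def B_def by (intro sum.cong refl rhs_summand_deriv)
  also have "\<dots> = P * rhs_series t n + (S1 - fps_const (1/2) * S2)"
    unfolding R S1_def S2_def by (simp add: sum.distrib sum_subtractf sum_distrib_left)
  finally have split: "fps_deriv (rhs_series t n) = P * rhs_series t n + (S1 - fps_const (1/2) * S2)" .
  have "S1 - fps_const (1/2) * S2 = - (if n = 0 then 0 else rhs_series t (n - 1))"
  proof (cases n)
    case 0
    then show ?thesis by (simp add: S1_def S2_def cross_series_deriv_0)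
  next
    case (Suc n')
    have "S1 = (\<Sum>j=0..n'. fps_deriv (cross_series (Suc j)) * H * B (n' - j))"
      unfolding S1_def Suc sum.atLeast0_atMost_Suc_shift by (simp add: cross_series_deriv_0)
    also have "\<dots> = - (fps_const (1/2) * rhs_series t n')"
      unfolding R cross_series_deriv_Suc by (simp add: sum_distrib_left sum_negf mult.assoc)
    finally have S1: "S1 = - (fps_const (1/2) * rhs_series t n')" .
    have S2: "S2 = rhs_series t n'"
      unfolding S2_def R Suc sum.atLeast0_atMost_Suc by (auto intro!: sum.cong simp: Suc_diff_le)
    show ?thesis
      using S1 S2 Suc by (simp add: algebra_simps flip: fps_const_add)
  qed
  then show ?thesis
    using split by (simp add: P_def)
qed

lemma rhs_series_nth_0: "fps_nth (rhs_series t n) 0 = t ^ n / fact n"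
proof -
  have "fps_nth (rhs_series t n) 0 = (\<Sum>j=0..n. if j = 0 then
      fps_nth (hermite_gf 0 (1 / sqrt 2) 0) 0 * fps_nth (hermite_gf (sqrt 2 * t) (1 / sqrt 2) n) 0
      else 0)"
    unfolding rhs_series_def fps_sum_nth by (intro sum.cong refl) (auto simp: cross_series_def)
  also have "\<dots> = t ^ n / fact n"
    by (simp add: hermite_gf_nth hermite2_0 flip: power_mult_distrib)
  finally show ?thesis .
qed

lemma hermite_gf_eq_rhs_series: "hermite_gf t 1 n = rhs_series t n"
proof (induction n rule: less_induct)
  case (less n)
  define P where "P = fps_const (2 * t) - fps_const 2 * (fps_X :: real fps)"
  define Q where "Q = - (if n = 0 then 0 else rhs_series t (n - 1))"
  have "fps_deriv (hermite_gf t 1 n) = P * hermite_gf t 1 n + Q"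
    using less[of "n - 1"] by (simp add: hermite_gf_deriv P_def Q_def)
  moreover have "fps_deriv (rhs_series t n) = P * rhs_series t n + Q"
    by (simp add: rhs_series_deriv P_def Q_def)
  moreover have "fps_nth (hermite_gf t 1 n) 0 = fps_nth (rhs_series t n) 0"
    by (simp add: rhs_series_nth_0 hermite_gf_nth hermite2_0)
  ultimately show ?case
    by (rule fps_linear_ode_unique)
qed

lemma rhs_series_nth:
  "fps_nth (rhs_series t n) m = (\<Sum>j=0..n. if j \<le> m then (-1) ^ j * (1/2) ^ j / fact j *
    (\<Sum>a=0..m-j. fps_nth (hermite_gf 0 (1 / sqrt 2) 0) a
                 * fps_nth (hermite_gf (sqrt 2 * t) (1 / sqrt 2) (n - j)) (m - j - a)) else 0)"
  unfolding rhs_series_def fps_sum_nth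
  by (intro sum.cong refl)
     (simp only: cross_series_def mult.assoc fps_mult_left_const_nth fps_X_power_mult_nth,
      simp add: fps_mult_nth)

text \<open>One term of the coefficient sum, written in the shape of the theorem
  (with the summation index shifted by k = a + j).\<close>

lemma rhs_coefficient_term:
  assumes "j \<le> m" and "j \<le> n" and "a \<le> m - j"
  shows "(-1) ^ j * (1/2) ^ j / fact j * (fps_nth (hermite_gf 0 (1 / sqrt 2) 0) a
           * fps_nth (hermite_gf (sqrt 2 * t) (1 / sqrt 2) (n - j)) (m - j - a)) =
    (1 / sqrt 2) ^ (m + n) *
      ((-1) ^ j / (fact j * fact (a + j - j)) * hermite (a + j - j) 0 *
       hermite2 (m - (a + j)) (n - j) (sqrt 2 * t) / (fact (m - (a + j)) * fact (n - j)))"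
proof -
  define r :: real where "r = 1 / sqrt 2"
  have exponent: "m + n = a + ((m - j - a) + (n - j)) + 2 * j"
    using assms by arith
  have pw: "r ^ (m + n) = r ^ a * r ^ ((m - j - a) + (n - j)) * (1/2) ^ j"
    unfolding exponent power_add power_mult r_def inv_sqrt2_squared by simp
  have idx: "m - (a + j) = m - j - a"
    by arith
  show ?thesis
    unfolding r_def[symmetric] pw idx
    by (simp add: hermite_gf_nth hermite_eq_hermite2 r_def field_simps)
qed

lemma rhs_series_nth_closed:
  "fps_nth (rhs_series t n) m = (1 / sqrt 2) ^ (m + n) *
    (\<Sum>j = 0..n. \<Sum>k = j..m.
       (-1) ^ j / (fact j * fact (k - j)) * hermite (k - j) 0 *
       hermite2 (m - k) (n - j) (sqrt 2 * t) / (fact (m - k) * fact (n - j)))"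
  (is "_ = ?c * (\<Sum>j = 0..n. \<Sum>k = j..m. ?term j k)")
proof -
  have block: "(if j \<le> m then (-1) ^ j * (1/2) ^ j / fact j *
      (\<Sum>a=0..m-j. fps_nth (hermite_gf 0 (1 / sqrt 2) 0) a
         * fps_nth (hermite_gf (sqrt 2 * t) (1 / sqrt 2) (n - j)) (m - j - a)) else 0)
      = ?c * (\<Sum>k = j..m. ?term j k)" if "j \<le> n" for j
  proof (cases "j \<le> m")
    case True
    then have shift: "(\<Sum>k = j..m. f k) = (\<Sum>a = 0..m - j. f (a + j))" for f :: "nat \<Rightarrow> real"
      using sum.shift_bounds_cl_nat_ivl[of f 0 j "m - j"] by simp
    show ?thesis
      unfolding shift sum_distrib_left if_P[OF True]
      by (intro sum.cong refl rhs_coefficient_term) (use True \<open>j \<le> n\<close> in auto)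
  qed simp
  have "fps_nth (rhs_series t n) m = (\<Sum>j = 0..n. ?c * (\<Sum>k = j..m. ?term j k))"
    unfolding rhs_series_nth by (intro sum.cong refl block) simp
  then show ?thesis
    by (simp only: sum_distrib_left)
qed

theorem mainTheorem9:
  fixes m n :: nat and t :: real
  shows "hermite2 m n t =
    fact m * fact n * (1 / sqrt 2) ^ (m + n) *
    (\<Sum>j = 0..n. \<Sum>k = j..m.
       (-1) ^ j / (fact j * fact (k - j)) * hermite (k - j) 0 *
       hermite2 (m - k) (n - j) (sqrt 2 * t) / (fact (m - k) * fact (n - j)))"
proof -
  have "hermite2 m n t = fact m * fact n * fps_nth (hermite_gf t 1 n) m"
    by (simp add: hermite_gf_nth)
  also have "\<dots> = fact m * fact n * fps_nth (rhs_series t n) m"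
    by (simp add: hermite_gf_eq_rhs_series)
  finally show ?thesis
    by (simp add: rhs_series_nth_closed mult.assoc)
qed

end
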